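(* Let $C>1$, $P$ a probability measure on $[0,\infty)$ with $\mu_{P,C}>0$, and $\alpha>0$ such that $\alpha\,\mu_{P,C}\le\mathbb{E}_{t\sim P}\big[t\,\mathbf 1[t<m_P]\big]$. Then: (a) $G_{P,C}(\mu)\ge\alpha\mu$ for $0\le\mu\le\frac{\mu_{P,C}}2$; (b) $G_{P,C}(\mu)\ge\alpha(\mu_{P,C}-\mu)$ for $\frac{\mu_{P,C}}2\le\mu\le\mu_{P,C}$; (c) $G_{P,C}(\mu)\le-\alpha(\mu-\mu_{P,C})$ for $\mu\ge\mu_{P,C}$.
   Context: For $\mu\ge0$ define $G_{P,C}(\mu):=\mathbb{E}_{t\sim P}[\min\{t,C\mu\}]-\mu$. The $C$-clipped mean $\mu_{P,C}$ is the largest $\mu\ge0$ with $G_{P,C}(\mu)=0$. The $\frac1C$-median is $m_P:=\sup\{M\ge0:\mathbb{P}_{t\sim P}[t\ge M]\ge\frac1C\}$. *)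

theory Defs
  imports "HOL-Probability.Probability"
begin

text \<open>P is modelled as a probability measure M on the Borel reals, concentrated on [0,\<infinity>).\<close>

definition clipG :: "real measure \<Rightarrow> real \<Rightarrow> real \<Rightarrow> real" where
  "clipG M C mu = (\<integral>t. min t (C * mu) \<partial>M) - mu"

definition clipped_mean :: "real measure \<Rightarrow> real \<Rightarrow> real" where
  "clipped_mean M C = (GREATEST mu. mu \<ge> 0 \<and> clipG M C mu = 0)"

definition inv_median :: "real measure \<Rightarrow> real \<Rightarrow> real" where
  "inv_median M C = Sup {m. m \<ge> 0 \<and> measure M {t \<in> space M. t \<ge> m} \<ge> 1 / C}"

end

theory Submission
  imports Defs
begin

text \<open>Since min(t, -) is concave, so is G = G_{P,C}, and G vanishes at 0 and at the clipped mean
  \<mu>. Parts (a) and (b) therefore follow from the midpoint bound G(\<mu>/2) \<ge> \<alpha> \<mu>/2. Write T for the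
  truncated mean E[t 1[t < m]] and x = C \<mu>, so that E[min(t, x)] = \<mu>. The median tail has mass at
  least 1/C, which forces m \<le> x. Then min(t, x/2) dominates T/2 + \<mu>/2 in expectation, giving the
  midpoint bound; and min(t, x) \<ge> t 1[t < m] + x 1[t > x] shows that the mass q beyond x satisfies
  \<alpha> + C q \<le> 1, which is the slope bound (c) since raising the clipping level beyond x gains at
  most C q per unit of \<mu>.\<close>

lemma min_convex_combination_le:
  fixes t a b u v :: real
  assumes "0 \<le> u" "0 \<le> v" "u + v = 1"
  shows "u * min t a + v * min t b \<le> min t (u * a + v * b)"
proof (rule min.boundedI)
  have "u * min t a + v * min t b \<le> u * t + v * t"
    using assms by (intro add_mono mult_left_mono) auto
  also have "u * t + v * t = t"
    using assms by (metis distrib_right mult_1)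
  finally show "u * min t a + v * min t b \<le> t" .
  show "u * min t a + v * min t b \<le> u * a + v * b"
    using assms by (intro add_mono mult_left_mono) auto
qed

lemma concave_on_ge_tent:
  fixes f :: "real \<Rightarrow> real"
  assumes concave: "concave_on {0..b} f" and "b > 0"
    and "f 0 = 0" "f b = 0" and mid: "\<alpha> * (b / 2) \<le> f (b / 2)"
  shows "\<And>x. 0 \<le> x \<Longrightarrow> x \<le> b / 2 \<Longrightarrow> \<alpha> * x \<le> f x"
    and "\<And>x. b / 2 \<le> x \<Longrightarrow> x \<le> b \<Longrightarrow> \<alpha> * (b - x) \<le> f x"
proof -
  have "concave_on {0..b/2} f" "concave_on {b/2..b} f"
    using concave unfolding concave_on_def
    by (auto intro: convex_on_subset)
  note left = concave_onD_Icc'[OF this(1)] and right = concave_onD_Icc''[OF this(2)]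
  have slope: "\<alpha> \<le> f (b / 2) / (b / 2)"
    using mid \<open>b > 0\<close> by (simp add: field_simps)
  show "\<alpha> * x \<le> f x" if "0 \<le> x" "x \<le> b / 2" for x
  proof -
    have "\<alpha> * x \<le> f (b / 2) / (b / 2) * x"
      using slope that by (intro mult_right_mono) auto
    also have "\<dots> \<le> f x"
      using left[of x] that \<open>f 0 = 0\<close> by simp
    finally show ?thesis .
  qed
  show "\<alpha> * (b - x) \<le> f x" if "b / 2 \<le> x" "x \<le> b" for x
  proof -
    have "\<alpha> * (b - x) \<le> f (b / 2) / (b / 2) * (b - x)"
      using slope that by (intro mult_right_mono) auto
    also have "\<dots> \<le> f x"
      using right[of x] that \<open>f b = 0\<close> \<open>b > 0\<close> by (simp add: field_simps)
    finally show ?thesis .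
  qed
qed

locale nonneg_real_distribution = real_distribution M for M :: "real measure" +
  assumes AE_nonneg: "AE t in M. t \<ge> 0"
begin

lemma integrable_bounded:
  fixes f :: "real \<Rightarrow> real"
  assumes "f \<in> borel_measurable borel" "AE t in M. \<bar>f t\<bar> \<le> B"
  shows "integrable M f"
  using assms by (intro integrable_const_bound[where B=B]) auto

lemma integrable_min_const: "integrable M (\<lambda>t. min t c)"
  by (rule integrable_bounded[where B="\<bar>c\<bar>"]) (use AE_nonneg in auto)

lemma integrable_truncated_identity: "integrable M (\<lambda>t. t * indicator {..<m} t)"
  by (rule integrable_bounded[where B="\<bar>m\<bar>"])
    (use AE_nonneg in \<open>auto simp: indicator_def\<close>)

lemma integrable_indicator_borel:
  "A \<in> sets borel \<Longrightarrow> integrable M (indicator A :: real \<Rightarrow> real)"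
  by (rule integrable_bounded[where B=1]) (auto simp: indicator_def)

lemma integral_indicator_borel: "A \<in> sets borel \<Longrightarrow> (\<integral>t. indicator A t \<partial>M) = prob A"
  by simp

lemma integral_le_plus_const:
  fixes f g :: "real \<Rightarrow> real"
  assumes "integrable M f" "integrable M g" "AE t in M. f t \<le> g t + c"
  shows "(\<integral>t. f t \<partial>M) \<le> (\<integral>t. g t \<partial>M) + c"
proof -
  have "(\<integral>t. f t \<partial>M) \<le> (\<integral>t. g t + c \<partial>M)"
    using assms by (intro integral_mono_AE integrable_add) auto
  also have "\<dots> = (\<integral>t. g t \<partial>M) + c"
    using assms by (simp add: prob_space[simplified])
  finally show ?thesis .
qed

lemma integral_lin_comb_le:
  fixes a b :: real
  assumes "integrable M f" "integrable M g" "integrable M h"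
    and "AE t in M. a * g t + b * h t \<le> f t"
  shows "a * (\<integral>t. g t \<partial>M) + b * (\<integral>t. h t \<partial>M) \<le> (\<integral>t. f t \<partial>M)"
proof -
  have "a * (\<integral>t. g t \<partial>M) + b * (\<integral>t. h t \<partial>M) = (\<integral>t. a * g t + b * h t \<partial>M)"
    using assms by simp
  also have "\<dots> \<le> (\<integral>t. f t \<partial>M)"
    using assms by (intro integral_mono_AE) auto
  finally show ?thesis .
qed

lemma prob_greaterThan: "prob {x<..} = 1 - cdf M x"
proof -
  have "{x<..} = space M - {..x}" by auto
  then show ?thesis using prob_compl[of "{..x}"] by (simp add: cdf_def)
qed

lemma prob_atLeast: "prob {x..} = 1 - prob {..<x}"
proof -
  have "{x..} = space M - {..<x}" by auto
  then show ?thesis using prob_compl[of "{..<x}"] by simp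
qed

lemma tail_prob_less:
  assumes "e > 0"
  shows "\<exists>K\<ge>0. prob {K<..} < e"
proof -
  have "\<forall>\<^sub>F K in at_top. 1 - e < cdf M K \<and> 0 \<le> K"
    using order_tendstoD(1)[OF cdf_lim_at_top_prob, of "1 - e"] assms
    by (auto intro: eventually_conj eventually_ge_at_top)
  then obtain K where "1 - e < cdf M K" "0 \<le> K"
    using eventually_happens by force
  then show ?thesis
    by (intro exI[of _ K]) (simp add: prob_greaterThan)
qed

lemma clipG_zero: "clipG M C 0 = 0"
  unfolding clipG_def by (simp, rule integral_eq_zero_AE) (use AE_nonneg in auto)

lemma clipG_lipschitz: "(\<bar>C\<bar> + 1)-lipschitz_on UNIV (clipG M C)"
proof (rule lipschitz_onI)
  fix a b :: real
  have d: "\<bar>C * a - C * b\<bar> = \<bar>C\<bar> * \<bar>a - b\<bar>"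
    by (metis abs_mult right_diff_distrib)
  have "(\<integral>t. min t (C * a) \<partial>M) \<le> (\<integral>t. min t (C * b) \<partial>M) + \<bar>C * a - C * b\<bar>"
    "(\<integral>t. min t (C * b) \<partial>M) \<le> (\<integral>t. min t (C * a) \<partial>M) + \<bar>C * a - C * b\<bar>"
    by (rule integral_le_plus_const; auto simp: integrable_min_const)+
  then show "dist (clipG M C a) (clipG M C b) \<le> (\<bar>C\<bar> + 1) * dist a b"
    unfolding clipG_def dist_real_def d by (auto simp: abs_le_iff algebra_simps)
qed simp

lemma clipG_concave: "concave_on UNIV (clipG M C)"
  unfolding concave_on_iff
proof (intro conjI ballI allI impI)
  fix x y u v :: real
  assume uv: "0 \<le> u" "0 \<le> v" "u + v = 1"
  have "u * (\<integral>t. min t (C * x) \<partial>M) + v * (\<integral>t. min t (C * y) \<partial>M)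
      \<le> (\<integral>t. min t (C * (u * x + v * y)) \<partial>M)"
  proof (rule integral_lin_comb_le[OF integrable_min_const integrable_min_const integrable_min_const])
    have "C * (u * x + v * y) = u * (C * x) + v * (C * y)"
      by (simp add: algebra_simps)
    then show "AE t in M. u * min t (C * x) + v * min t (C * y) \<le> min t (C * (u * x + v * y))"
      using min_convex_combination_le[OF uv] by simp
  qed
  then show "u * clipG M C x + v * clipG M C y \<le> clipG M C (u *\<^sub>R x + v *\<^sub>R y)"
    using uv unfolding clipG_def by (simp add: algebra_simps)
qed simp

lemma clipG_le_affine:
  assumes "0 \<le> K" "0 \<le> C" "0 \<le> mu"
  shows "clipG M C mu \<le> K + mu * (C * prob {K<..} - 1)"
proof -
  have "(\<integral>t. min t (C * mu) \<partial>M) \<le> (\<integral>t. C * mu * indicator {K<..} t \<partial>M) + K"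
    by (intro integral_le_plus_const integrable_min_const integrable_mult_right integrable_indicator_borel)
      (use AE_nonneg assms in \<open>auto simp: indicator_def\<close>)
  also have "\<dots> = C * mu * prob {K<..} + K"
    by (simp only: integral_mult_right_zero integral_indicator_borel greaterThan_borel)
  finally show ?thesis
    unfolding clipG_def by (simp add: algebra_simps)
qed

text \<open>The zero set of G is closed since G is Lipschitz, and bounded since G eventually decreases
  linearly, so the supremum defining the clipped mean is a zero of G.\<close>

lemma clipped_mean_root:
  assumes "C > 1"
  shows "0 \<le> clipped_mean M C" "clipG M C (clipped_mean M C) = 0"
proof -
  define Z where "Z = {mu. 0 \<le> mu \<and> clipG M C mu = 0}"
  obtain K where K: "0 \<le> K" "prob {K<..} < 1 / C"
    using tail_prob_less[of "1 / C"] assms by auto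
  define p where "p = prob {K<..}"
  have Cp: "C * p < 1"
    using K assms unfolding p_def by (simp add: field_simps)
  have "mu \<le> K / (1 - C * p)" if "mu \<in> Z" for mu
  proof -
    have "0 \<le> K + mu * (C * p - 1)"
      using clipG_le_affine[of K C mu] K assms that unfolding Z_def p_def by auto
    then show ?thesis
      using Cp by (simp add: field_simps)
  qed
  then have bdd: "bdd_above Z" by (rule bdd_aboveI)
  have "closed Z"
    unfolding Z_def
    using lipschitz_on_continuous_on[OF clipG_lipschitz]
    by (intro closed_Collect_conj closed_Collect_le closed_Collect_eq continuous_intros) auto
  moreover have "0 \<in> Z"
    unfolding Z_def using clipG_zero by simp
  ultimately have "Sup Z \<in> Z"
    using bdd by (intro closed_contains_Sup) auto
  moreover have "clipped_mean M C = Sup Z"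
    unfolding clipped_mean_def
    by (rule Greatest_equality) (use \<open>Sup Z \<in> Z\<close> bdd in \<open>auto simp: Z_def intro: cSup_upper\<close>)
  ultimately show "0 \<le> clipped_mean M C" "clipG M C (clipped_mean M C) = 0"
    unfolding Z_def by auto
qed

lemma inv_median_tail:
  assumes "C > 1"
  shows "1 / C \<le> prob {inv_median M C..}"
proof -
  define S where "S = {m. 0 \<le> m \<and> 1 / C \<le> prob {m..}}"
  have median: "inv_median M C = Sup S"
    unfolding inv_median_def S_def by (simp add: atLeast_def)
  obtain K where K: "0 \<le> K" "prob {K<..} < 1 / C"
    using tail_prob_less[of "1 / C"] assms by auto
  have "m \<le> K" if "m \<in> S" for m
  proof (rule ccontr)
    assume "\<not> m \<le> K"
    then have "prob {m..} \<le> prob {K<..}"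
      by (intro finite_measure_mono) auto
    then show False
      using that K unfolding S_def by auto
  qed
  then have bdd: "bdd_above S" by (rule bdd_aboveI)
  have "prob {0..} = 1"
    using AE_nonneg prob_Collect_eq_1[of "\<lambda>t. 0 \<le> t"] by (simp add: atLeast_def)
  then have "0 \<in> S"
    unfolding S_def using assms by simp
  \<comment> \<open>The tail probability is left-continuous in its level, so approach Sup S from the left.\<close>
  have "\<forall>\<^sub>F x in at_left (Sup S). 1 / C \<le> 1 - cdf M x"
  proof (rule eventually_at_leftI)
    fix x assume "x \<in> {Sup S - 1<..<Sup S}"
    then obtain m where "m \<in> S" "x < m"
      using less_cSup_iff[OF _ bdd] \<open>0 \<in> S\<close> by (auto simp: Ball_def)
    then have "1 / C \<le> prob {m..}" "prob {m..} \<le> prob {x<..}"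
      unfolding S_def by (auto intro!: finite_measure_mono)
    then show "1 / C \<le> 1 - cdf M x"
      by (simp add: prob_greaterThan)
  qed simp
  moreover have "((\<lambda>x. 1 - cdf M x) \<longlongrightarrow> 1 - measure M {..<Sup S}) (at_left (Sup S))"
    by (intro tendsto_diff tendsto_const cdf_at_left)
  ultimately have "1 / C \<le> 1 - measure M {..<Sup S}"
    by (intro tendsto_lowerbound) (auto simp: trivial_limit_at_left_real)
  then show ?thesis
    by (simp add: median prob_atLeast)
qed

lemma integral_min_clipped_mean:
  assumes "C > 1"
  shows "(\<integral>t. min t (C * clipped_mean M C) \<partial>M) = clipped_mean M C"
  using clipped_mean_root(2)[OF assms] unfolding clipG_def by simp

context
  fixes C \<alpha> :: real
  assumes C: "C > 1" and clipped_mean_pos: "0 < clipped_mean M C" and \<alpha>: "0 < \<alpha>"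
    and truncated_mean: "\<alpha> * clipped_mean M C
      \<le> (\<integral>t. t * indicator {..<inv_median M C} t \<partial>M)"
begin

lemma inv_median_le: "inv_median M C \<le> C * clipped_mean M C"
proof (rule ccontr)
  define m where "m = inv_median M C"
  define x where "x = C * clipped_mean M C"
  define T where "T = (\<integral>t. t * indicator {..<m} t \<partial>M)"
  assume "\<not> inv_median M C \<le> C * clipped_mean M C"
  then have xm: "x < m" and x0: "0 < x"
    using C clipped_mean_pos unfolding m_def x_def by auto
  have "x * prob {m..} + x / m * T \<le> (\<integral>t. min t x \<partial>M)"
    unfolding T_def integral_indicator_borel[OF atLeast_borel, symmetric]
  proof (intro integral_lin_comb_le integrable_min_const integrable_indicator_borel
      integrable_truncated_identity atLeast_borel)
    show "AE t in M. x * indicator {m..} t + x / m * (t * indicator {..<m} t) \<le> min t x"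
      using AE_nonneg
    proof eventually_elim
      case (elim t)
      show ?case
      proof (cases "m \<le> t")
        case False
        have "x / m * t \<le> t"
          using xm x0 elim by (intro mult_left_le_one_le) auto
        moreover have "x / m * t \<le> x / m * m"
          using False xm x0 by (intro mult_left_mono) auto
        ultimately show ?thesis
          using False xm x0 by (simp add: indicator_def)
      qed (use xm in \<open>simp add: indicator_def\<close>)
    qed
  qed
  moreover have "clipped_mean M C \<le> x * prob {m..}"
    using inv_median_tail[OF C] x0 C unfolding m_def x_def
    by (auto simp: field_simps dest: mult_left_mono[of _ _ "C * clipped_mean M C"])
  moreover have "0 < x / m * T"
    using truncated_mean clipped_mean_pos \<alpha> xm x0 unfolding T_def m_def
    by (smt (verit) divide_pos_pos mult_pos_pos)
  ultimately show False
    using integral_min_clipped_mean[OF C] unfolding x_def by linarith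
qed

lemma clipG_above_clipped_mean:
  assumes "clipped_mean M C \<le> mu"
  shows "clipG M C mu \<le> - \<alpha> * (mu - clipped_mean M C)"
proof -
  define ms where "ms = clipped_mean M C"
  define x where "x = C * ms"
  define q where "q = prob {x<..}"
  have min_x: "(\<integral>t. min t x \<partial>M) = ms"
    using integral_min_clipped_mean[OF C] unfolding x_def ms_def .
  have "1 * (\<integral>t. t * indicator {..<inv_median M C} t \<partial>M) + x * q \<le> (\<integral>t. min t x \<partial>M)"
    unfolding q_def integral_indicator_borel[OF greaterThan_borel, symmetric]
    by (intro integral_lin_comb_le integrable_min_const integrable_indicator_borel
        integrable_truncated_identity greaterThan_borel)
      (use AE_nonneg inv_median_le in \<open>auto simp: indicator_def x_def ms_def\<close>)
  then have "ms * (\<alpha> + C * q) \<le> ms * 1"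
    using truncated_mean min_x unfolding x_def ms_def by (simp add: algebra_simps)
  then have tail: "\<alpha> + C * q \<le> 1"
    using clipped_mean_pos unfolding ms_def by (simp add: mult_le_cancel_left_pos)
  have integrable_majorant: "integrable M (\<lambda>t. min t x + C * (mu - ms) * indicator {x<..} t)"
    using integrable_min_const integrable_indicator_borel[OF greaterThan_borel, of x] by simp
  have "(\<integral>t. min t (C * mu) \<partial>M)
      \<le> (\<integral>t. min t x + C * (mu - ms) * indicator {x<..} t \<partial>M)"
  proof (intro integral_mono_AE integrable_majorant integrable_min_const AE_I2)
    fix t
    have "C * mu = x + C * (mu - ms)" "0 \<le> C * (mu - ms)"
      using assms C unfolding x_def ms_def by (auto simp: algebra_simps)
    then show "min t (C * mu) \<le> min t x + C * (mu - ms) * indicator {x<..} t"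
      by (auto simp: indicator_def)
  qed
  also have "\<dots> = ms + C * (mu - ms) * q"
    using integrable_min_const integrable_indicator_borel[OF greaterThan_borel, of x]
    by (simp add: min_x q_def integral_indicator_borel)
  finally have "clipG M C mu \<le> (mu - ms) * (C * q - 1)"
    unfolding clipG_def by (simp add: algebra_simps)
  also have "\<dots> \<le> (mu - ms) * (- \<alpha>)"
    using assms tail unfolding ms_def by (intro mult_left_mono) auto
  finally show ?thesis
    unfolding ms_def by (simp add: mult.commute)
qed

lemma clipG_half_clipped_mean: "\<alpha> * (clipped_mean M C / 2) \<le> clipG M C (clipped_mean M C / 2)"
proof -
  define ms where "ms = clipped_mean M C"
  define m where "m = inv_median M C"
  define x where "x = C * ms"
  define T where "T = (\<integral>t. t * indicator {..<m} t \<partial>M)"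
  have min_x: "(\<integral>t. min t x \<partial>M) = ms"
    using integral_min_clipped_mean[OF C] unfolding x_def ms_def .
  have mx: "m \<le> x"
    using inv_median_le unfolding m_def x_def ms_def .
  have "T / 2 + ms / 2 \<le> (\<integral>t. min t (x / 2) \<partial>M)"
  proof (cases "x / 2 \<le> m")
    case True
    have "1 / 2 * T + x / 2 * prob {m..} \<le> (\<integral>t. min t (x / 2) \<partial>M)"
      unfolding T_def integral_indicator_borel[OF atLeast_borel, symmetric]
      by (intro integral_lin_comb_le integrable_min_const integrable_indicator_borel
          integrable_truncated_identity atLeast_borel)
        (use AE_nonneg mx True in \<open>auto simp: indicator_def\<close>)
    moreover have "ms / 2 \<le> x / 2 * prob {m..}"
      using inv_median_tail[OF C] C clipped_mean_pos unfolding m_def x_def ms_def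
      by (auto simp: field_simps dest: mult_left_mono[of _ _ "C * clipped_mean M C"])
    ultimately show ?thesis by linarith
  next
    case False
    have "1 / 2 * (\<integral>t. min t x \<partial>M) + 1 / 2 * T \<le> (\<integral>t. min t (x / 2) \<partial>M)"
      unfolding T_def
      by (intro integral_lin_comb_le integrable_min_const integrable_truncated_identity)
        (use AE_nonneg mx False in \<open>auto simp: indicator_def\<close>)
    then show ?thesis
      using min_x by simp
  qed
  moreover have "\<alpha> * ms \<le> T"
    using truncated_mean unfolding T_def m_def ms_def .
  moreover have "x / 2 = C * (ms / 2)"
    unfolding x_def by simp
  ultimately show ?thesis
    unfolding clipG_def ms_def by simp
qed

end

end

theorem mainTheorem18:
  fixes M :: "real measure" and C \<alpha> :: real
  assumes "prob_space M"
    and "sets M = sets borel"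
    and "AE t in M. t \<ge> 0"
    and "C > 1"
    and "clipped_mean M C > 0"
    and "\<alpha> > 0"
    and "\<alpha> * clipped_mean M C \<le> (\<integral>t. t * indicator {..<inv_median M C} t \<partial>M)"
  shows "(\<forall>mu. 0 \<le> mu \<and> mu \<le> clipped_mean M C / 2 \<longrightarrow> clipG M C mu \<ge> \<alpha> * mu)
       \<and> (\<forall>mu. clipped_mean M C / 2 \<le> mu \<and> mu \<le> clipped_mean M C
            \<longrightarrow> clipG M C mu \<ge> \<alpha> * (clipped_mean M C - mu))
       \<and> (\<forall>mu. mu \<ge> clipped_mean M C \<longrightarrow> clipG M C mu \<le> - \<alpha> * (mu - clipped_mean M C))"
proof -
  interpret nonneg_real_distribution M
    using assms(1-3)
    by (intro nonneg_real_distribution.intro real_distribution.intro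
        nonneg_real_distribution_axioms.intro real_distribution_axioms.intro)
  have "concave_on {0..clipped_mean M C} (clipG M C)"
    using clipG_concave unfolding concave_on_def by (rule convex_on_subset) auto
  note tent = concave_on_ge_tent[OF this assms(5) clipG_zero clipped_mean_root(2)[OF assms(4)]
      clipG_half_clipped_mean[OF assms(4-7)]]
  show ?thesis
    using tent clipG_above_clipped_mean[OF assms(4-7)] by auto
qed

end
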